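(* Let $0<q<1$ and define the positive measure $\mu$ on $\mathbb C$ by $$\int_{\mathbb C} f\,d\mu=\sum_{k=0}^\infty\frac{q^k}{(q;q)_k}\,\frac{1}{2\pi}\int_0^{2\pi}f\big(q^{k/2}e^{i\theta}\big)\,d\theta .$$ Then for all $m,n,s,t\in\mathbb N_0$, $$\int_{\mathbb C}H_{m,n}(z,\bar z|q)\,\overline{H_{s,t}(z,\bar z|q)}\,d\mu(z)=\frac{q^{mn}(q;q)_m(q;q)_n}{(q;q)_\infty}\,\delta_{m,s}\delta_{n,t}.$$
   Context: $(a;q)_n=\prod_{j=0}^{n-1}(1-aq^j)$, $(a;q)_\infty=\prod_{j\ge0}(1-aq^j)$, $\left[{m\atop k}\right]_q=\frac{(q;q)_m}{(q;q)_k(q;q)_{m-k}}$, $m\wedge n=\min\{m,n\}$. The first $q$-$2D$-Hermite polynomials are $$H_{m,n}(z_1,z_2|q)=\sum_{k=0}^{m\wedge n}\left[{m\atop k}\right]_q\left[{n\atop k}\right]_q(-1)^kq^{\binom k2}(q;q)_k\,z_1^{m-k}z_2^{n-k},$$ and $H_{m,n}(z,\bar z|q)$ denotes this polynomial evaluated at $z_1=z$, $z_2=\bar z$. *)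

theory Defs
  imports "HOL-Analysis.Analysis"
begin

definition qpoch :: "'a::real_normed_field \<Rightarrow> 'a \<Rightarrow> nat \<Rightarrow> 'a" where
  "qpoch a q n = (\<Prod>j<n. 1 - a * q ^ j)"

definition qpoch_inf :: "real \<Rightarrow> real \<Rightarrow> real" where
  "qpoch_inf a q = (\<Prod>j. 1 - a * q ^ j)"

definition qbinom :: "real \<Rightarrow> nat \<Rightarrow> nat \<Rightarrow> real" where
  "qbinom q m k = qpoch q q m / (qpoch q q k * qpoch q q (m - k))"

definition qHermite2D :: "nat \<Rightarrow> nat \<Rightarrow> complex \<Rightarrow> complex \<Rightarrow> real \<Rightarrow> complex" where
  "qHermite2D m n z1 z2 q =
     (\<Sum>k\<le>min m n. of_real (qbinom q m k * qbinom q n k * (-1) ^ k * q ^ (k choose 2)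
        * qpoch q q k) * z1 ^ (m - k) * z2 ^ (n - k))"

text \<open>The k-th term of the integral of f against the measure mu:
  q^k/(q;q)_k * (1/(2 pi)) * int_0^{2 pi} f(q^{k/2} e^{i theta}) d theta.\<close>
definition mu_term :: "real \<Rightarrow> (complex \<Rightarrow> complex) \<Rightarrow> nat \<Rightarrow> complex" where
  "mu_term q f k = of_real (q ^ k / qpoch q q k) *
     (integral {0..2*pi} (\<lambda>\<theta>. f (of_real (q powr (real k / 2)) * cis \<theta>)) / (2 * pi))"

end

theory Submission
  imports Defs
begin

text \<open>Writing \<open>z = r e^{i\<theta>}\<close>, one has \<open>H_{m,n}(z, conj z) = e^{i(m-n)\<theta>} P_{m,n}(r)\<close>
  with a real polynomial \<open>P_{m,n}\<close>, so the angular average kills the integrand unless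
  \<open>m - n = s - t\<close>. Expanding both radial polynomials, the series over the circles
  \<open>r^2 = q^j\<close> becomes a finite combination of Euler series
  \<open>\<Sum>_j (q^{a+1})^j / (q;q)_j = (q;q)_a / (q;q)_\<infinity>\<close>. The remaining finite double sum is
  evaluated through a q-Pascal recurrence in \<open>m\<close> for the coefficients \<open>c_{m,n,k}\<close> of
  \<open>H_{m,n}\<close>: it gives \<open>\<Sum>_k c_{m,n,k} (q;q)_{n+a-k} = q^{mn} (q^{a-m+1};q)_m (q;q)_{n+a-m}\<close>,
  which vanishes for \<open>a < m\<close>. Together with the symmetry of the double sum under
  \<open>(m,n) \<leftrightarrow> (s,t)\<close> this yields orthogonality and the norm.\<close>

section \<open>q-Pochhammer symbols and Euler's series\<close>

lemma qpoch_0 [simp]: "qpoch a q 0 = 1"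
  by (simp add: qpoch_def)

lemma qpoch_Suc: "qpoch a q (Suc n) = qpoch a q n * (1 - a * q ^ n)"
  by (simp add: qpoch_def)

lemma qpoch_q_Suc: "qpoch q q (Suc n) = qpoch q q n * (1 - q ^ Suc n)"
  by (simp add: qpoch_Suc)

lemma qpoch_q_pos:
  assumes "0 < (q::real)" "q < 1"
  shows "qpoch q q n > 0"
proof (induction n)
  case (Suc n)
  have "q ^ Suc n < 1" using assms by (rule power_Suc_less_one)
  then show ?case using Suc by (simp add: qpoch_q_Suc)
qed simp

lemma summable_q_power_div_qpoch:
  assumes q: "0 < (q::real)" "q < 1"
  shows "summable (\<lambda>j. q ^ j / qpoch q q j)"
proof -
  define c where "c = (1 + q) / 2"
  have c: "c < 1" "q < c" using q by (auto simp: c_def)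
  have "(\<lambda>j. q ^ Suc j) \<longlonglongrightarrow> 0"
    using LIMSEQ_power_zero[of q] q by (simp add: LIMSEQ_Suc)
  moreover have "0 < 1 - q / c" using c q by (simp add: field_simps)
  ultimately have "eventually (\<lambda>j. q ^ Suc j < 1 - q / c) sequentially"
    by (rule order_tendstoD(2))
  then obtain N where N: "\<And>j. j \<ge> N \<Longrightarrow> q ^ Suc j < 1 - q / c"
    by (auto simp: eventually_sequentially)
  show ?thesis
  proof (rule summable_ratio_test[OF c(1), of N])
    fix j assume "j \<ge> N"
    then have "q ^ Suc j < 1 - q / c" by (rule N)
    then have "q \<le> c * (1 - q ^ Suc j)"
      using c q by (simp add: field_simps)
    moreover have lt: "q ^ Suc j < 1" using q by (rule power_Suc_less_one)
    ultimately have ratio: "q / (1 - q ^ Suc j) \<le> c"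
      by (simp add: divide_le_eq)
    have p: "qpoch q q j > 0" using qpoch_q_pos[OF q] by auto
    have "q ^ Suc j / qpoch q q (Suc j) = (q ^ j / qpoch q q j) * (q / (1 - q ^ Suc j))"
      using lt by (simp add: qpoch_q_Suc field_simps)
    also have "\<dots> \<le> (q ^ j / qpoch q q j) * c"
      using ratio p q by (intro mult_left_mono) auto
    finally show "norm (q ^ Suc j / qpoch q q (Suc j)) \<le> c * norm (q ^ j / qpoch q q j)"
      using p q qpoch_q_pos[OF q, of "Suc j"] by (simp add: mult.commute)
  qed
qed

lemma summable_euler_series:
  assumes q: "0 < (q::real)" "q < 1"
  shows "summable (\<lambda>j. (q ^ Suc a) ^ j / qpoch q q j)"
proof (rule summable_comparison_test'[OF summable_q_power_div_qpoch[OF q]])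
  fix j :: nat
  have "(q ^ Suc a) ^ j \<le> q ^ j" unfolding power_mult[symmetric]
    using q by (intro power_decreasing) auto
  then show "norm ((q ^ Suc a) ^ j / qpoch q q j) \<le> q ^ j / qpoch q q j"
    using qpoch_q_pos[OF q, of j] q by (simp add: divide_right_mono)
qed

definition euler_sum :: "real \<Rightarrow> nat \<Rightarrow> real" where
  "euler_sum q a = (\<Sum>j. (q ^ Suc a) ^ j / qpoch q q j)"

lemma euler_series_sums:
  assumes "0 < (q::real)" "q < 1"
  shows "(\<lambda>j. (q ^ Suc a) ^ j / qpoch q q j) sums euler_sum q a"
  unfolding euler_sum_def by (rule summable_sums[OF summable_euler_series[OF assms]])

text \<open>The difference of consecutive Euler series telescopes termwise:
  \<open>(x^{j+1} - (xq)^{j+1}) / (q;q)_{j+1} = x \<cdot> x^j / (q;q)_j\<close>.\<close>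

lemma euler_sum_Suc:
  assumes q: "0 < (q::real)" "q < 1"
  shows "euler_sum q (Suc a) = (1 - q ^ Suc a) * euler_sum q a"
proof -
  define x where "x = q ^ Suc a"
  define g where "g j = x ^ j / qpoch q q j" for j
  define h where "h j = (x * q) ^ j / qpoch q q j" for j
  have g: "g sums euler_sum q a"
    unfolding g_def x_def by (rule euler_series_sums[OF q])
  have h: "h sums euler_sum q (Suc a)"
    unfolding h_def x_def using euler_series_sums[OF q, of "Suc a"] by (simp add: mult.commute)
  have shift: "g (Suc i) - h (Suc i) = x * g i" for i
  proof -
    have lt: "q ^ Suc i < 1" using q by (rule power_Suc_less_one)
    have "g (Suc i) - h (Suc i) = (x ^ Suc i - (x * q) ^ Suc i) / qpoch q q (Suc i)"
      unfolding g_def h_def by (simp add: diff_divide_distrib)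
    also have "\<dots> = x ^ Suc i * (1 - q ^ Suc i) / (qpoch q q i * (1 - q ^ Suc i))"
      unfolding qpoch_q_Suc by (simp only: power_mult_distrib right_diff_distrib mult_1_right)
    also have "\<dots> = x * g i"
      using lt qpoch_q_pos[OF q, of i] unfolding g_def by (simp add: field_simps)
    finally show ?thesis .
  qed
  have "(\<lambda>i. g (Suc i) - h (Suc i)) sums (x * euler_sum q a)"
    unfolding shift by (rule sums_mult[OF g])
  then have "(\<lambda>j. g j - h j) sums (x * euler_sum q a)"
    by (subst (asm) sums_Suc_iff) (simp add: g_def h_def)
  with sums_diff[OF g h] have "euler_sum q a - euler_sum q (Suc a) = x * euler_sum q a"
    by (rule sums_unique2)
  then show ?thesis by (simp add: x_def algebra_simps)
qed

lemma euler_sum_eq_qpoch: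
  assumes "0 < (q::real)" "q < 1"
  shows "euler_sum q a = qpoch q q a * euler_sum q 0"
  by (induction a) (simp_all add: euler_sum_Suc[OF assms] qpoch_q_Suc)

lemma euler_sum_bounds:
  assumes q: "0 < (q::real)" "q < 1"
  shows "1 \<le> euler_sum q a" "euler_sum q a \<le> 1 + q ^ a * euler_sum q 0"
proof -
  define g where "g a j = (q ^ Suc a) ^ j / qpoch q q j" for a j
  have tail: "(\<lambda>j. g a (Suc j)) sums (euler_sum q a - 1)" for a
    using euler_series_sums[OF q, of a] unfolding g_def
    by (subst sums_Suc_iff) simp
  have "g a j \<ge> 0" for j
    using qpoch_q_pos[OF q, of j] q unfolding g_def by simp
  then have "euler_sum q a - 1 \<ge> 0"
    using sums_le[OF _ sums_zero tail[of a]] by auto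
  then show "1 \<le> euler_sum q a" by simp
  have "g a (Suc j) \<le> q ^ a * g 0 (Suc j)" for j
  proof -
    have "(q ^ Suc a) ^ Suc j \<le> q ^ (a + Suc j)" unfolding power_mult[symmetric]
      using q by (intro power_decreasing) auto
    then have "(q ^ Suc a) ^ Suc j / qpoch q q (Suc j) \<le> q ^ (a + Suc j) / qpoch q q (Suc j)"
      using qpoch_q_pos[OF q, of "Suc j"] by (intro divide_right_mono) auto
    then show ?thesis unfolding g_def by (simp add: power_add mult_ac)
  qed
  then have "euler_sum q a - 1 \<le> q ^ a * (euler_sum q 0 - 1)"
    by (rule sums_le[OF _ tail sums_mult[OF tail]])
  moreover have "q ^ a * (euler_sum q 0 - 1) \<le> q ^ a * euler_sum q 0"
    using q by (intro mult_left_mono) auto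
  ultimately show "euler_sum q a \<le> 1 + q ^ a * euler_sum q 0" by linarith
qed

lemma euler_sum_tendsto_1:
  assumes q: "0 < (q::real)" "q < 1"
  shows "(\<lambda>a. euler_sum q a) \<longlonglongrightarrow> 1"
proof (rule tendsto_sandwich[of "\<lambda>_. 1" _ _ "\<lambda>a. 1 + q ^ a * euler_sum q 0"])
  have "(\<lambda>a. 1 + q ^ a * euler_sum q 0) \<longlonglongrightarrow> 1 + 0 * euler_sum q 0"
    using q by (intro tendsto_intros LIMSEQ_power_zero) auto
  then show "(\<lambda>a. 1 + q ^ a * euler_sum q 0) \<longlonglongrightarrow> 1" by simp
qed (use euler_sum_bounds[OF q] in auto)

lemma qpoch_inf_eq_inverse_euler_sum:
  assumes q: "0 < (q::real)" "q < 1"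
  shows "qpoch_inf q q = 1 / euler_sum q 0"
proof -
  have pos: "euler_sum q 0 \<ge> 1" using euler_sum_bounds[OF q] by simp
  have "(\<lambda>a. euler_sum q a / euler_sum q 0) \<longlonglongrightarrow> 1 / euler_sum q 0"
    using euler_sum_tendsto_1[OF q] pos by (intro tendsto_divide) auto
  moreover have "euler_sum q n / euler_sum q 0 = (\<Prod>j<n. 1 - q * q ^ j)" for n
    using euler_sum_eq_qpoch[OF q, of n] pos by (simp add: qpoch_def)
  ultimately have "(\<lambda>n. \<Prod>j<n. 1 - q * q ^ j) \<longlonglongrightarrow> 1 / euler_sum q 0" by simp
  then show ?thesis
    unfolding qpoch_inf_def using pos by (intro prodinf_eq_prod_lim') auto
qed

lemma euler_series_sums_qpoch:
  assumes q: "0 < (q::real)" "q < 1"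
  shows "(\<lambda>j. (q ^ Suc a) ^ j / qpoch q q j) sums (qpoch q q a / qpoch_inf q q)"
  using euler_series_sums[OF q, of a]
  by (simp add: euler_sum_eq_qpoch[OF q, of a] qpoch_inf_eq_inverse_euler_sum[OF q])

section \<open>Coefficients of \<open>H_{m,n}\<close> and the q-Pascal recurrence\<close>

definition qHermite_coeff :: "real \<Rightarrow> nat \<Rightarrow> nat \<Rightarrow> nat \<Rightarrow> real" where
  "qHermite_coeff q m n k =
     (if k \<le> m \<and> k \<le> n then (-1) ^ k * q ^ (k choose 2) * qpoch q q m * qpoch q q n /
        (qpoch q q k * qpoch q q (m - k) * qpoch q q (n - k)) else 0)"

lemma qHermite_coeff_eq:
  assumes q: "0 < (q::real)" "q < 1" and k: "k \<le> m" "k \<le> n"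
  shows "qbinom q m k * qbinom q n k * (-1) ^ k * q ^ (k choose 2) * qpoch q q k =
         qHermite_coeff q m n k"
  using k qpoch_q_pos[OF q, of k] qpoch_q_pos[OF q, of "m - k"] qpoch_q_pos[OF q, of "n - k"]
  by (simp add: qbinom_def qHermite_coeff_def field_simps)

lemma qHermite_coeff_0 [simp]:
  assumes "0 < (q::real)" "q < 1"
  shows "qHermite_coeff q m n 0 = 1"
  using qpoch_q_pos[OF assms, of m] qpoch_q_pos[OF assms, of n]
  by (simp add: qHermite_coeff_def numeral_2_eq_2)

lemma qHermite_coeff_Suc_interior:
  assumes q: "0 < (q::real)" "q < 1"
  shows "qHermite_coeff q (Suc (Suc j + u)) (Suc (j + v)) (Suc j) =
         qHermite_coeff q (Suc j + u) (Suc (j + v)) (Suc j)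
         - q ^ (Suc j + u) * (1 - q ^ Suc (j + v)) * qHermite_coeff q (Suc j + u) (j + v) j"
proof -
  define X where "X = q ^ j"
  define U where "U = q ^ u"
  have X: "X > 0" "q * X < 1" using q by (auto simp: X_def intro: power_Suc_less_one[simplified])
  have U: "U > 0" "q * U < 1" using q by (auto simp: U_def intro: power_Suc_less_one[simplified])
  have p: "qpoch q q j > 0" "qpoch q q u > 0" "qpoch q q v > 0" "qpoch q q (j + u) > 0"
     "qpoch q q (j + v) > 0" using qpoch_q_pos[OF q] by auto
  have c: "Suc j choose 2 = (j choose 2) + j" by (simp add: numeral_2_eq_2)
  have idx: "Suc (Suc j + u) - Suc j = Suc u" "Suc j + u - Suc j = u" "Suc (j + v) - Suc j = v"
     "j + v - j = v" "Suc j + u - j = Suc u" by auto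
  have pw: "q ^ (j + u) = X * U" "q ^ (Suc j + u) = q * X * U" "q ^ Suc (Suc j + u) = q * q * X * U"
    "q ^ Suc j = q * X" "q ^ Suc u = q * U"
    by (simp_all add: X_def U_def power_add)
  have nz: "1 - q * X \<noteq> 0" "1 - q * U \<noteq> 0" using X U by auto
  show ?thesis unfolding qHermite_coeff_def idx using nz p
    apply (simp add: c power_add qpoch_q_Suc pw del: power_Suc)
    apply (simp add: pw[unfolded power_Suc] X_def[symmetric] U_def[symmetric] divide_simps)
    apply (simp add: algebra_simps)
    done
qed

lemma qHermite_coeff_Suc_diagonal:
  assumes q: "0 < (q::real)" "q < 1"
  shows "qHermite_coeff q (Suc m) (Suc (m + v)) (Suc m) =
         - (q ^ m * (1 - q ^ Suc (m + v)) * qHermite_coeff q m (m + v) m)"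
proof -
  have p: "qpoch q q m > 0" "qpoch q q v > 0" "qpoch q q (Suc m) > 0" "qpoch q q (m + v) > 0"
    using qpoch_q_pos[OF q] by auto
  have c: "Suc m choose 2 = (m choose 2) + m" by (simp add: numeral_2_eq_2)
  have idx: "Suc (m + v) - Suc m = v" "m + v - m = v" by auto
  show ?thesis unfolding qHermite_coeff_def idx using p
    by (simp add: c power_add qpoch_q_Suc[of q "m + v"] field_simps)
qed

lemma qHermite_coeff_Suc:
  assumes q: "0 < (q::real)" "q < 1"
  shows "qHermite_coeff q (Suc m) n k = qHermite_coeff q m n k
    - (if k = 0 then 0 else q ^ m * (1 - q ^ n) * qHermite_coeff q m (n - 1) (k - 1))"
proof (cases k)
  case 0 then show ?thesis using q by simp
next
  case (Suc j)
  show ?thesis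
  proof (cases n)
    case 0 then show ?thesis using Suc by (simp add: qHermite_coeff_def)
  next
    case (Suc n')
    consider (interior) "j < m" "j \<le> n'" | (diagonal) "j = m" "m \<le> n'"
      | (outside) "\<not> (j < m \<and> j \<le> n')" "\<not> (j = m \<and> m \<le> n')" by blast
    then show ?thesis
    proof cases
      case interior
      then obtain u v where "m = Suc j + u" "n' = j + v"
        by (metis add_Suc le_Suc_ex less_eq_Suc_le le_add_diff_inverse)
      then show ?thesis
        using qHermite_coeff_Suc_interior[OF q, of j u v] \<open>k = Suc j\<close> \<open>n = Suc n'\<close> by simp
    next
      case diagonal
      then obtain v where v: "n' = m + v" using le_Suc_ex by blast
      have "qHermite_coeff q m (Suc (m + v)) (Suc m) = 0" by (simp add: qHermite_coeff_def)
      then show ?thesis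
        using qHermite_coeff_Suc_diagonal[OF q, of m v] diagonal \<open>k = Suc j\<close> \<open>n = Suc n'\<close> v
        by simp
    next
      case outside
      then show ?thesis using \<open>k = Suc j\<close> \<open>n = Suc n'\<close> by (auto simp: qHermite_coeff_def)
    qed
  qed
qed

section \<open>Polar form and the angular integral\<close>

definition qHermite_radial :: "real \<Rightarrow> nat \<Rightarrow> nat \<Rightarrow> real \<Rightarrow> real" where
  "qHermite_radial q m n r = (\<Sum>k\<le>n. qHermite_coeff q m n k * r ^ (m - k) * r ^ (n - k))"

lemma polar_monomial:
  "(of_real r * cis \<theta>) ^ i * cnj (of_real r * cis \<theta>) ^ l =
   of_real (r ^ i * r ^ l) * cis ((real i - real l) * \<theta>)"
proof -
  have "cis \<theta> ^ i = cis (real i * \<theta>)" "cis (- \<theta>) ^ l = cis (real l * (- \<theta>))"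
    by (rule Complex.DeMoivre)+
  then have "(of_real r * cis \<theta>) ^ i * cnj (of_real r * cis \<theta>) ^ l =
        of_real (r ^ i * r ^ l) * (cis (real i * \<theta>) * cis (real l * (- \<theta>)))"
    by (simp only: power_mult_distrib complex_cnj_mult complex_cnj_complex_of_real cis_cnj
        of_real_mult of_real_power mult_ac)
  also have "\<dots> = of_real (r ^ i * r ^ l) * cis ((real i - real l) * \<theta>)"
    by (simp add: cis_mult algebra_simps)
  finally show ?thesis .
qed

lemma qHermite2D_polar:
  assumes q: "0 < (q::real)" "q < 1"
  shows "qHermite2D m n (of_real r * cis \<theta>) (cnj (of_real r * cis \<theta>)) q =
         cis ((real m - real n) * \<theta>) * of_real (qHermite_radial q m n r)"
proof -
  have "qHermite2D m n (of_real r * cis \<theta>) (cnj (of_real r * cis \<theta>)) q =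
     (\<Sum>k\<le>min m n. cis ((real m - real n) * \<theta>) *
        of_real (qHermite_coeff q m n k * r ^ (m - k) * r ^ (n - k)))"
    unfolding qHermite2D_def
  proof (intro sum.cong refl)
    fix k assume "k \<in> {..min m n}"
    then have k: "k \<le> m" "k \<le> n" by auto
    then have "cis ((real (m - k) - real (n - k)) * \<theta>) = cis ((real m - real n) * \<theta>)"
      by (simp add: of_nat_diff)
    then show "complex_of_real (qbinom q m k * qbinom q n k * (- 1) ^ k * q ^ (k choose 2) *
          qpoch q q k) * (of_real r * cis \<theta>) ^ (m - k) * cnj (of_real r * cis \<theta>) ^ (n - k) =
        cis ((real m - real n) * \<theta>) * of_real (qHermite_coeff q m n k * r ^ (m - k) * r ^ (n - k))"
      unfolding qHermite_coeff_eq[OF q k, symmetric] mult.assoc polar_monomial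
      by (simp only: mult_ac of_real_mult)
  qed
  also have "\<dots> = cis ((real m - real n) * \<theta>) *
      of_real (\<Sum>k\<le>min m n. qHermite_coeff q m n k * r ^ (m - k) * r ^ (n - k))"
    by (simp add: sum_distrib_left)
  also have "(\<Sum>k\<le>min m n. qHermite_coeff q m n k * r ^ (m - k) * r ^ (n - k)) =
      qHermite_radial q m n r"
    unfolding qHermite_radial_def
    by (intro sum.mono_neutral_left) (auto simp: qHermite_coeff_def)
  finally show ?thesis .
qed

lemma has_integral_cis_int_multiple:
  fixes D :: int
  assumes "D \<noteq> 0"
  shows "((\<lambda>\<theta>. cis (of_int D * \<theta>)) has_integral 0) {0..2*pi}"
proof -
  define c where "c = \<i> * of_real (of_int D)"
  have c: "c \<noteq> 0" using assms by (simp add: c_def)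
  have deriv: "((\<lambda>\<theta>. cis (of_int D * \<theta>) / c) has_vector_derivative cis (of_int D * x))
      (at x within {0..2*pi})" for x
  proof -
    have "((\<lambda>\<theta>. cis (of_int D * \<theta>)) has_derivative
        (\<lambda>t. (of_int D * t) *\<^sub>R (\<i> * cis (of_int D * x)))) (at x within {0..2*pi})"
      by (intro has_derivative_cis derivative_intros)
    then have "((\<lambda>\<theta>. cis (of_int D * \<theta>)) has_vector_derivative c * cis (of_int D * x))
        (at x within {0..2*pi})"
      unfolding has_vector_derivative_def by (simp add: c_def scaleR_conv_of_real mult_ac)
    then show ?thesis
      using has_vector_derivative_divide[of _ _ _ c] c by fastforce
  qed
  have "((\<lambda>\<theta>. cis (of_int D * \<theta>)) has_integral
      (cis (of_int D * (2*pi)) / c - cis (of_int D * 0) / c)) {0..2*pi}"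
    by (rule fundamental_theorem_of_calculus) (simp_all add: deriv)
  moreover have "cis (of_int D * (2*pi)) = 1"
    using cis_multiple_2pi[of "of_int D"] by (simp add: mult_ac)
  ultimately show ?thesis by simp
qed

lemma integral_cis_int_multiple:
  fixes D :: int and c :: complex
  shows "integral {0..2*pi} (\<lambda>\<theta>. cis (of_int D * \<theta>) * c) = (if D = 0 then 2 * pi * c else 0)"
proof (cases "D = 0")
  case True then show ?thesis by (simp add: scaleR_conv_of_real)
next
  case False
  then show ?thesis
    using integral_mult_left[of "{0..2*pi}" "\<lambda>\<theta>. cis (of_int D * \<theta>)" c]
      has_integral_cis_int_multiple[OF False] by (simp add: integral_unique)
qed

section \<open>The product integrated against \<open>\<mu>\<close>\<close>

lemma qHermite_product_polar:
  assumes q: "0 < (q::real)" "q < 1"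
  shows "qHermite2D m n (of_real r * cis \<theta>) (cnj (of_real r * cis \<theta>)) q *
      cnj (qHermite2D s t (of_real r * cis \<theta>) (cnj (of_real r * cis \<theta>)) q) =
    cis (of_int (int m - int n - int s + int t) * \<theta>) *
      of_real (qHermite_radial q m n r * qHermite_radial q s t r)"
proof -
  have "cis ((real m - real n) * \<theta>) * cis (- ((real s - real t) * \<theta>)) =
      cis (of_int (int m - int n - int s + int t) * \<theta>)"
    by (simp add: cis_mult algebra_simps)
  then show ?thesis unfolding qHermite2D_polar[OF q] by (simp add: cis_cnj mult_ac)
qed

lemma radial_term_expand:
  assumes q: "0 < (q::real)" "q < 1" and mnst: "m + t = n + s"
  shows "q ^ j / qpoch q q j *
      (qHermite_radial q m n (q powr (real j / 2)) * qHermite_radial q s t (q powr (real j / 2))) =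
    (\<Sum>k\<le>n. \<Sum>l\<le>t. qHermite_coeff q m n k * qHermite_coeff q s t l *
       ((q ^ Suc (n + s - k - l)) ^ j / qpoch q q j))"
proof -
  define r where "r = q powr (real j / 2)"
  have r2: "r ^ 2 = q ^ j"
    using q by (simp add: r_def power2_eq_square powr_add[symmetric] powr_realpow)
  have "q ^ j / qpoch q q j * (qHermite_radial q m n r * qHermite_radial q s t r) =
     (\<Sum>k\<le>n. \<Sum>l\<le>t. q ^ j / qpoch q q j * (qHermite_coeff q m n k * r ^ (m - k) * r ^ (n - k) *
       (qHermite_coeff q s t l * r ^ (s - l) * r ^ (t - l))))"
    unfolding qHermite_radial_def sum_product by (simp add: sum_distrib_left)
  also have "\<dots> = (\<Sum>k\<le>n. \<Sum>l\<le>t. qHermite_coeff q m n k * qHermite_coeff q s t l *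
       ((q ^ Suc (n + s - k - l)) ^ j / qpoch q q j))"
  proof (intro sum.cong refl)
    fix k l assume kl: "k \<in> {..n}" "l \<in> {..t}"
    show "q ^ j / qpoch q q j * (qHermite_coeff q m n k * r ^ (m - k) * r ^ (n - k) *
        (qHermite_coeff q s t l * r ^ (s - l) * r ^ (t - l))) =
      qHermite_coeff q m n k * qHermite_coeff q s t l * ((q ^ Suc (n + s - k - l)) ^ j / qpoch q q j)"
    proof (cases "k \<le> m \<and> l \<le> s")
      case True
      then have "(m - k) + (n - k) + ((s - l) + (t - l)) = 2 * (n + s - k - l)"
        using kl mnst by auto
      then have "r ^ (m - k) * r ^ (n - k) * (r ^ (s - l) * r ^ (t - l)) = (q ^ j) ^ (n + s - k - l)"
        by (metis power_add power_mult r2)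
      moreover have "q ^ j * (q ^ j) ^ (n + s - k - l) = (q ^ Suc (n + s - k - l)) ^ j"
        by (simp add: power_mult[symmetric] power_add[symmetric] algebra_simps)
      ultimately show ?thesis by (simp add: mult_ac)
    next
      case False
      then have "qHermite_coeff q m n k = 0 \<or> qHermite_coeff q s t l = 0"
        by (auto simp: qHermite_coeff_def)
      then show ?thesis by auto
    qed
  qed
  finally show ?thesis unfolding r_def .
qed

lemma mu_term_qHermite_product:
  assumes q: "0 < (q::real)" "q < 1"
  shows "mu_term q (\<lambda>z. qHermite2D m n z (cnj z) q * cnj (qHermite2D s t z (cnj z) q)) j =
    (if m + t = n + s then
       of_real (\<Sum>k\<le>n. \<Sum>l\<le>t. qHermite_coeff q m n k * qHermite_coeff q s t l *
         ((q ^ Suc (n + s - k - l)) ^ j / qpoch q q j))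
     else 0)"
proof -
  define r where "r = q powr (real j / 2)"
  have eq: "mu_term q (\<lambda>z. qHermite2D m n z (cnj z) q * cnj (qHermite2D s t z (cnj z) q)) j =
    of_real (if m + t = n + s then
       q ^ j / qpoch q q j * (qHermite_radial q m n r * qHermite_radial q s t r) else 0)"
    unfolding mu_term_def r_def[symmetric] qHermite_product_polar[OF q] integral_cis_int_multiple
    by simp
  show ?thesis
  proof (cases "m + t = n + s")
    case True
    show ?thesis using eq by (simp only: r_def radial_term_expand[OF q True] if_P[OF True])
  qed (use eq in simp)
qed

section \<open>Evaluation of the radial double sum\<close>

text \<open>For \<open>m \<le> a\<close> this is \<open>(q^{a-m+1};q)_m\<close>; for \<open>a < m\<close> the truncated subtraction produces the
  factor \<open>1 - q^0 = 0\<close>.\<close>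

definition qfalling :: "real \<Rightarrow> nat \<Rightarrow> nat \<Rightarrow> real" where
  "qfalling q a m = (\<Prod>i<m. 1 - q ^ (a - i))"

lemma qfalling_Suc: "qfalling q a (Suc m) = qfalling q a m * (1 - q ^ (a - m))"
  by (simp add: qfalling_def)

lemma qfalling_eq_0: "a < m \<Longrightarrow> qfalling q a m = 0"
  unfolding qfalling_def by (intro prod_zero) (auto intro!: bexI[of _ a])

lemma qfalling_self: "qfalling q m m = qpoch q q m"
proof -
  have "qfalling q m m = (\<Prod>i<m. (\<lambda>j. 1 - q ^ Suc j) (m - Suc i))"
    unfolding qfalling_def by (intro prod.cong) (auto simp: Suc_diff_Suc)
  also have "\<dots> = (\<Prod>j<m. 1 - q ^ Suc j)" by (rule prod.nat_diff_reindex)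
  finally show ?thesis by (simp add: qpoch_def)
qed

definition qHermite_pairing :: "real \<Rightarrow> nat \<Rightarrow> nat \<Rightarrow> nat \<Rightarrow> real" where
  "qHermite_pairing q m n a = (\<Sum>k\<le>n. qHermite_coeff q m n k * qpoch q q (n + a - k))"

lemma qHermite_pairing_Suc:
  assumes q: "0 < (q::real)" "q < 1"
  shows "qHermite_pairing q (Suc m) n a =
    qHermite_pairing q m n a - q ^ m * (1 - q ^ n) * qHermite_pairing q m (n - 1) a"
proof (cases n)
  case 0 then show ?thesis using q by (simp add: qHermite_pairing_def)
next
  case (Suc n')
  have "qHermite_pairing q (Suc m) n a = qHermite_pairing q m n a -
      (\<Sum>k\<le>Suc n'. (if k = 0 then 0 else q ^ m * (1 - q ^ n) * qHermite_coeff q m (n - 1) (k - 1))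
        * qpoch q q (n + a - k))"
    unfolding qHermite_pairing_def qHermite_coeff_Suc[OF q]
    by (simp add: left_diff_distrib sum_subtractf Suc)
  also have "(\<Sum>k\<le>Suc n'. (if k = 0 then 0 else q ^ m * (1 - q ^ n) *
        qHermite_coeff q m (n - 1) (k - 1)) * qpoch q q (n + a - k)) =
      (\<Sum>k\<le>n'. q ^ m * (1 - q ^ n) * qHermite_coeff q m n' k * qpoch q q (n' + a - k))"
    by (subst sum.atMost_Suc_shift) (simp add: Suc)
  also have "\<dots> = q ^ m * (1 - q ^ n) * qHermite_pairing q m (n - 1) a"
    by (simp add: qHermite_pairing_def sum_distrib_left Suc mult.assoc)
  finally show ?thesis .
qed

lemma qHermite_pairing_eq:
  assumes q: "0 < (q::real)" "q < 1"
  shows "m \<le> n + a \<Longrightarrow>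
    qHermite_pairing q m n a = q ^ (m * n) * qfalling q a m * qpoch q q (n + a - m)"
proof (induction m arbitrary: n)
  case 0
  have "qHermite_pairing q 0 n a = (\<Sum>k\<le>n. (if k = 0 then qpoch q q (n + a) else 0))"
    unfolding qHermite_pairing_def using q qpoch_q_pos[OF q, of n]
    by (intro sum.cong) (auto simp: qHermite_coeff_def numeral_2_eq_2)
  then show ?case by (simp add: qfalling_def)
next
  case (Suc m)
  note rec = qHermite_pairing_Suc[OF q, of m n a] Suc.IH[OF Suc.prems[THEN Suc_leD]]
  consider (below) "a < m" | (diagonal) "a = m" | (above) "m < a" by linarith
  then show ?case
  proof cases
    case below
    then have "qHermite_pairing q m (n - 1) a = 0"
      using Suc.IH[of "n - 1"] Suc.prems by (simp add: qfalling_eq_0)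
    then show ?thesis unfolding rec using below by (simp add: qfalling_eq_0)
  next
    case diagonal
    then obtain n' where n: "n = Suc n'" using Suc.prems by (cases n) auto
    have "qHermite_pairing q m n' a = q ^ (m * n') * qfalling q a m * qpoch q q (n' + a - m)"
      using Suc.IH[of n'] diagonal by simp
    moreover have "qfalling q a (Suc m) = 0" using diagonal by (simp add: qfalling_eq_0)
    ultimately show ?thesis
      unfolding rec using diagonal n by (simp add: qpoch_q_Suc power_add algebra_simps)
  next
    case above
    show ?thesis
    proof (cases n)
      case 0
      have "a - m = Suc (a - Suc m)" using above by simp
      then show ?thesis unfolding rec using 0 by (simp add: qfalling_Suc qpoch_q_Suc)
    next
      case (Suc n')
      have idx: "n + a - m = Suc (n' + a - m)" "n + a - Suc m = n' + a - m"
        using above Suc by auto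
      have pw: "q ^ Suc (n' + a - m) = q ^ Suc n' * q ^ (a - m)"
        "q ^ (a + n' - m) = q ^ n' * q ^ (a - m)"
        using above by (simp_all add: power_add[symmetric] add.commute)
      have "qHermite_pairing q m n' a = q ^ (m * n') * qfalling q a m * qpoch q q (n' + a - m)"
        using Suc.IH[of n'] above by simp
      then show ?thesis
        unfolding rec using idx Suc by (simp add: qpoch_q_Suc qfalling_Suc pw power_add algebra_simps)
    qed
  qed
qed

definition radial_moment :: "real \<Rightarrow> nat \<Rightarrow> nat \<Rightarrow> nat \<Rightarrow> nat \<Rightarrow> real" where
  "radial_moment q m n s t = (\<Sum>k\<le>n. \<Sum>l\<le>t.
     qHermite_coeff q m n k * qHermite_coeff q s t l * qpoch q q (n + s - k - l))"

lemma radial_moment_sym: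
  assumes "m + t = n + s"
  shows "radial_moment q m n s t = radial_moment q s t m n"
  unfolding radial_moment_def
  by (subst sum.swap) (use assms in \<open>simp add: mult.commute add.commute[of t m] add.commute[of _ "_::nat"]\<close>)

lemma radial_moment_eq_sum_qfalling:
  assumes q: "0 < (q::real)" "q < 1" and mnst: "m + t = n + s"
  shows "radial_moment q m n s t =
    (\<Sum>l\<le>t. qHermite_coeff q s t l * (q ^ (m * n) * qfalling q (s - l) m * qpoch q q (t - l)))"
  unfolding radial_moment_def
proof (subst sum.swap, rule sum.cong[OF refl])
  fix l assume l: "l \<in> {..t}"
  show "(\<Sum>k\<le>n. qHermite_coeff q m n k * qHermite_coeff q s t l * qpoch q q (n + s - k - l)) =
        qHermite_coeff q s t l * (q ^ (m * n) * qfalling q (s - l) m * qpoch q q (t - l))"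
  proof (cases "l \<le> s")
    case True
    then have "(\<Sum>k\<le>n. qHermite_coeff q m n k * qHermite_coeff q s t l * qpoch q q (n + s - k - l)) =
        qHermite_coeff q s t l * qHermite_pairing q m n (s - l)"
      unfolding qHermite_pairing_def sum_distrib_left by (intro sum.cong refl) (simp add: algebra_simps)
    moreover have "m \<le> n + (s - l)" "n + (s - l) - m = t - l" using True l mnst by auto
    ultimately show ?thesis by (simp add: qHermite_pairing_eq[OF q])
  next
    case False
    then show ?thesis by (simp add: qHermite_coeff_def)
  qed
qed

lemma radial_moment_eq:
  assumes q: "0 < (q::real)" "q < 1" and mnst: "m + t = n + s"
  shows "radial_moment q m n s t =
    (if m = s \<and> n = t then q ^ (m * n) * qpoch q q m * qpoch q q n else 0)"
proof -
  have vanish: "radial_moment q m' n' s' t' = 0" if "m' + t' = n' + s'" "s' < m'" for m' n' s' t'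
    using that by (simp add: radial_moment_eq_sum_qfalling[OF q] qfalling_eq_0)
  consider "s < m" | "s = m" | "m < s" by linarith
  then show ?thesis
  proof cases
    case 2
    then have "t = n" using mnst by simp
    have summand: "qHermite_coeff q m n l * (q ^ (m * n) * qfalling q (m - l) m * qpoch q q (n - l)) =
        (if l = 0 then q ^ (m * n) * qpoch q q m * qpoch q q n else 0)" for l
    proof (cases "l = 0")
      case False
      then have "qfalling q (m - l) m = 0 \<or> qHermite_coeff q m n l = 0"
        by (cases "l \<le> m") (auto simp: qfalling_eq_0 qHermite_coeff_def)
      then show ?thesis using False by auto
    qed (use q in \<open>simp add: qfalling_self\<close>)
    show ?thesis
      using radial_moment_eq_sum_qfalling[OF q mnst] 2 \<open>t = n\<close> by (simp add: summand)
  next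
    case 1
    then show ?thesis using vanish[OF mnst] by simp
  next
    case 3
    have "radial_moment q s t m n = 0" by (rule vanish) (use mnst 3 in auto)
    then show ?thesis using radial_moment_sym[OF mnst] 3 by simp
  qed
qed

lemma radial_series_sums:
  assumes q: "0 < (q::real)" "q < 1" and mnst: "m + t = n + s"
  shows "(\<lambda>j. \<Sum>k\<le>n. \<Sum>l\<le>t. qHermite_coeff q m n k * qHermite_coeff q s t l *
      ((q ^ Suc (n + s - k - l)) ^ j / qpoch q q j)) sums (radial_moment q m n s t / qpoch_inf q q)"
proof -
  have "(\<lambda>j. \<Sum>k\<le>n. \<Sum>l\<le>t. qHermite_coeff q m n k * qHermite_coeff q s t l *
      ((q ^ Suc (n + s - k - l)) ^ j / qpoch q q j)) sums (\<Sum>k\<le>n. \<Sum>l\<le>t.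
      qHermite_coeff q m n k * qHermite_coeff q s t l * (qpoch q q (n + s - k - l) / qpoch_inf q q))"
    by (intro sums_sum sums_mult euler_series_sums_qpoch[OF q])
  then show ?thesis
    by (simp add: radial_moment_def sum_divide_distrib)
qed

theorem theorem3p3:
  fixes q :: real and m n s t :: nat
  assumes "0 < q" and "q < 1"
  shows "(mu_term q (\<lambda>z. qHermite2D m n z (cnj z) q * cnj (qHermite2D s t z (cnj z) q))) sums
           (of_real (q ^ (m * n) * qpoch q q m * qpoch q q n / qpoch_inf q q)
            * (if m = s \<and> n = t then 1 else 0))"
proof (cases "m + t = n + s")
  case True
  let ?radial_term = "\<lambda>j. \<Sum>k\<le>n. \<Sum>l\<le>t. qHermite_coeff q m n k * qHermite_coeff q s t l *
      ((q ^ Suc (n + s - k - l)) ^ j / qpoch q q j)"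
  have "mu_term q (\<lambda>z. qHermite2D m n z (cnj z) q * cnj (qHermite2D s t z (cnj z) q)) =
      (\<lambda>j. of_real (?radial_term j))"
    by (rule ext) (simp only: mu_term_qHermite_product[OF assms] if_P[OF True])
  moreover have "(\<lambda>j. of_real (?radial_term j)) sums
      (of_real (radial_moment q m n s t / qpoch_inf q q) :: complex)"
    using radial_series_sums[OF assms True] by (subst sums_of_real_iff)
  moreover have "of_real (radial_moment q m n s t / qpoch_inf q q) =
      of_real (q ^ (m * n) * qpoch q q m * qpoch q q n / qpoch_inf q q) *
      (if m = s \<and> n = t then 1 else (0::complex))"
    by (simp add: radial_moment_eq[OF assms True])
  ultimately show ?thesis by (simp only:)
next
  case False
  then have "mu_term q (\<lambda>z. qHermite2D m n z (cnj z) q * cnj (qHermite2D s t z (cnj z) q)) =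
      (\<lambda>_. 0)"
    by (simp add: mu_term_qHermite_product[OF assms] fun_eq_iff)
  then show ?thesis using False by auto
qed

end
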